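(* Let $(X,Y)$ be a random pair with $X\in\mathbb{R}^d$ and $Y\in\{+1,-1\}$ with arbitrary joint distribution. Let $\alpha\in[0,1)$ and let $\varphi$ be one of the losses $\varphi_{\mathrm{LR}},\varphi_{\mathrm{LS},\alpha},\varphi_{\mathrm{MLS},\alpha},\varphi_{\mathrm{LSQ}}$, with $\phi(v,y)=\varphi(yv)$. Let $\bar g\in\operatorname{argmin}_{g:\mathbb{R}^d\to\mathbb{R}}\mathbb{E}[\phi(g(X),Y)]$, and let $h(v)=-1$ if $v\le0$ and $h(v)=+1$ if $v>0$. Then $\Pr(h(\bar g(X))\neq Y)=\inf_{f:\mathbb{R}^d\to\{+1,-1\}}\Pr(f(X)\neq Y)$.
   Context: The losses are: $\varphi_{\mathrm{LR}}(v)=-\ln\frac{1}{1+e^{-v}}$; $\varphi_{\mathrm{LS},\alpha}(v)=-(1-\frac{\alpha}{2})\ln\frac{1}{1+e^{-v}}-\frac{\alpha}{2}\ln\frac{1}{1+e^{v}}$; $\varphi_{\mathrm{MLS},\alpha}(v)=-(1-\frac{\alpha}{2})\ln\big(\frac{1-\alpha}{1+e^{-v}}+\frac{\alpha}{2}\big)-\frac{\alpha}{2}\ln\big(\frac{1-\alpha}{1+e^{v}}+\frac{\alpha}{2}\big)$; $\varphi_{\mathrm{LSQ}}(v)=\frac{1}{2(1+e^{v})^2}$. Minimizations/infima are over measurable functions. The left-hand side is the expected zero-one loss (misclassification rate) of the classifier $h\circ\bar g$. *)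

theory Defs
  imports "HOL-Probability.Probability"
begin

definition phi_LR :: "real \<Rightarrow> real" where
  "phi_LR v = - ln (1 / (1 + exp (- v)))"

definition phi_LS :: "real \<Rightarrow> real \<Rightarrow> real" where
  "phi_LS \<alpha> v = - (1 - \<alpha> / 2) * ln (1 / (1 + exp (- v))) - (\<alpha> / 2) * ln (1 / (1 + exp v))"

definition phi_MLS :: "real \<Rightarrow> real \<Rightarrow> real" where
  "phi_MLS \<alpha> v = - (1 - \<alpha> / 2) * ln ((1 - \<alpha>) / (1 + exp (- v)) + \<alpha> / 2)
                   - (\<alpha> / 2) * ln ((1 - \<alpha>) / (1 + exp v) + \<alpha> / 2)"

definition phi_LSQ :: "real \<Rightarrow> real" where
  "phi_LSQ v = 1 / (2 * (1 + exp v)^2)"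

definition hcl :: "real \<Rightarrow> real" where
  "hcl v = (if v \<le> 0 then -1 else 1)"

end

theory Submission
  imports Defs
begin

(* Since gbar minimises the surrogate risk, changing gbar on a Borel set B of inputs cannot lower the
   part of the risk collected on B. Flipping the sign of gbar on B \<subseteq> {gbar > 0} shows that, weighted
   by the loss gap phi(-gbar) - phi(gbar) > 0, the label -1 carries no more mass than the label +1 on
   every such B; dividing out the weight gives the same for the plain masses. The case gbar < 0 is the
   same argument for (-Y, -gbar). On {gbar = 0}, replacing gbar by a constant t shows that t = 0
   minimises p phi(t) + q phi(-t), and phi'(0) < 0 forces p \<le> q. So on every region h \<circ> gbar predicts
   the label that is at least as likely as the other one, and no classifier can err less. *)

section \<open>Margin losses\<close>

locale margin_loss =
  fixes \<phi> :: "real \<Rightarrow> real"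
  assumes measurable[measurable]: "\<phi> \<in> borel_measurable borel"
    and nonneg: "0 \<le> \<phi> v"
    and favours_positive_margin: "0 < v \<Longrightarrow> \<phi> v < \<phi> (- v)"
    and decreasing_at_0: "\<exists>D<0. (\<phi> has_real_derivative D) (at 0)"

lemma margin_loss_smoothed_log_loss:
  fixes s :: "real \<Rightarrow> real"
  assumes [measurable]: "s \<in> borel_measurable borel"
    and pos: "\<And>v. 0 < s v" and le_1: "\<And>v. s v \<le> 1" and mono: "strict_mono s"
    and deriv: "(s has_real_derivative D) (at 0)" and "0 < D"
    and "0 \<le> a" and "a < 1/2"
  shows "margin_loss (\<lambda>v. - (1 - a) * ln (s v) - a * ln (s (- v)))"
proof
  show "(\<lambda>v. - (1 - a) * ln (s v) - a * ln (s (- v))) \<in> borel_measurable borel"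
    by measurable
  have ln_nonpos: "ln (s v) \<le> 0" for v
    using pos le_1 by (simp add: ln_le_zero_iff)
  show "0 \<le> - (1 - a) * ln (s v) - a * ln (s (- v))" for v
    using mult_nonpos_nonpos[of "a - 1" "ln (s v)"] mult_nonneg_nonpos[of a "ln (s (- v))"]
      ln_nonpos[of v] ln_nonpos[of "-v"] \<open>0 \<le> a\<close> \<open>a < 1/2\<close>
    by (simp add: algebra_simps)
  show "- (1 - a) * ln (s v) - a * ln (s (- v)) < - (1 - a) * ln (s (- v)) - a * ln (s (- (- v)))"
    if "0 < v" for v
  proof -
    have "ln (s (- v)) < ln (s v)"
      using mono \<open>0 < v\<close> pos by (simp add: strict_mono_less)
    then have "(1 - 2 * a) * ln (s (- v)) < (1 - 2 * a) * ln (s v)"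
      using \<open>a < 1/2\<close> by simp
    then show ?thesis
      by (simp add: algebra_simps)
  qed
  have ln_s: "((\<lambda>v. ln (s v)) has_real_derivative D / s 0) (at 0)"
    using DERIV_chain2[OF DERIV_ln_divide[OF pos] deriv] by simp
  have "((\<lambda>v. s (- v)) has_real_derivative - D) (at 0)"
    using DERIV_chain2[OF _ DERIV_minus[OF DERIV_ident], of s D] deriv by simp
  from DERIV_chain2[OF DERIV_ln_divide[OF pos[of "- 0"]] this]
  have ln_s_neg: "((\<lambda>v. ln (s (- v))) has_real_derivative - D / s 0) (at 0)"
    by simp
  have "((\<lambda>v. - (1 - a) * ln (s v) - a * ln (s (- v))) has_real_derivative
          - (1 - a) * (D / s 0) - a * (- D / s 0)) (at 0)"
    by (intro DERIV_diff DERIV_cmult ln_s ln_s_neg)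
  moreover have "- (1 - a) * (D / s 0) - a * (- D / s 0) = - ((1 - 2 * a) * D / s 0)"
    using pos[of 0] by (simp add: field_simps)
  moreover have "0 < (1 - 2 * a) * D / s 0"
    using \<open>0 < D\<close> \<open>a < 1/2\<close> pos[of 0] by simp
  ultimately show "\<exists>D'<0. ((\<lambda>v. - (1 - a) * ln (s v) - a * ln (s (- v))) has_real_derivative D') (at 0)"
    by (metis neg_less_0_iff_less)
qed

definition logistic :: "real \<Rightarrow> real" where
  "logistic v = 1 / (1 + exp (- v))"

lemma logistic_measurable[measurable]: "logistic \<in> borel_measurable borel"
  unfolding logistic_def by measurable

lemma logistic_pos: "0 < logistic v"
  by (simp add: logistic_def add_pos_pos)

lemma logistic_le_1: "logistic v \<le> 1"
  by (simp add: logistic_def add_pos_pos)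

lemma strict_mono_logistic: "strict_mono logistic"
  by (rule strict_monoI) (simp add: logistic_def add_pos_pos divide_strict_left_mono)

lemma logistic_has_real_derivative_0: "(logistic has_real_derivative 1/4) (at 0)"
  unfolding logistic_def by (rule derivative_eq_intros refl | simp add: add_pos_pos)+

lemma margin_loss_phi_LS:
  assumes "0 \<le> \<alpha>" "\<alpha> < 1"
  shows "margin_loss (phi_LS \<alpha>)"
proof -
  have "margin_loss (\<lambda>v. - (1 - \<alpha> / 2) * ln (logistic v) - \<alpha> / 2 * ln (logistic (- v)))"
    using assms by (intro margin_loss_smoothed_log_loss[where D = "1/4"] logistic_pos logistic_le_1
        strict_mono_logistic logistic_has_real_derivative_0) auto
  moreover have "phi_LS \<alpha> = (\<lambda>v. - (1 - \<alpha> / 2) * ln (logistic v) - \<alpha> / 2 * ln (logistic (- v)))"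
    by (simp add: phi_LS_def logistic_def fun_eq_iff)
  ultimately show ?thesis
    by simp
qed

lemma margin_loss_phi_LR: "margin_loss phi_LR"
proof -
  have "phi_LR = phi_LS 0"
    by (simp add: phi_LS_def phi_LR_def fun_eq_iff)
  then show ?thesis
    using margin_loss_phi_LS[of 0] by simp
qed

lemma margin_loss_phi_MLS:
  assumes "0 \<le> \<alpha>" "\<alpha> < 1"
  shows "margin_loss (phi_MLS \<alpha>)"
proof -
  define s where "s v = (1 - \<alpha>) * logistic v + \<alpha> / 2" for v
  have "margin_loss (\<lambda>v. - (1 - \<alpha> / 2) * ln (s v) - \<alpha> / 2 * ln (s (- v)))"
  proof (rule margin_loss_smoothed_log_loss)
    show "s \<in> borel_measurable borel"
      unfolding s_def by measurable
    show "0 < s v" for v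
      unfolding s_def by (intro add_pos_nonneg mult_pos_pos) (use assms logistic_pos in auto)
    show "s v \<le> 1" for v
    proof -
      have "(1 - \<alpha>) * logistic v \<le> 1 - \<alpha>"
        using assms logistic_le_1 by (simp add: mult_left_le)
      then show ?thesis
        unfolding s_def using assms by linarith
    qed
    show "strict_mono s"
      using assms strict_mono_logistic by (simp add: s_def strict_mono_def)
    show "(s has_real_derivative (1 - \<alpha>) * (1/4) + 0) (at 0)"
      unfolding s_def by (intro DERIV_add DERIV_cmult DERIV_const logistic_has_real_derivative_0)
  qed (use assms in auto)
  moreover have "phi_MLS \<alpha> = (\<lambda>v. - (1 - \<alpha> / 2) * ln (s v) - \<alpha> / 2 * ln (s (- v)))"
    by (simp add: phi_MLS_def s_def logistic_def fun_eq_iff)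
  ultimately show ?thesis
    by simp
qed

lemma margin_loss_phi_LSQ: "margin_loss phi_LSQ"
proof
  show "phi_LSQ \<in> borel_measurable borel"
    unfolding phi_LSQ_def by measurable
  show "0 \<le> phi_LSQ v" for v
    by (simp add: phi_LSQ_def)
  show "phi_LSQ v < phi_LSQ (- v)" if "0 < v" for v
  proof -
    have "(1 + exp (- v))\<^sup>2 < (1 + exp v)\<^sup>2"
      using \<open>0 < v\<close> by (intro power_strict_mono) (auto simp: add_pos_pos less_imp_le)
    then show ?thesis
      unfolding phi_LSQ_def by (intro divide_strict_left_mono) (auto intro!: mult_pos_pos add_pos_pos simp: add_nonneg_eq_0_iff)
  qed
  have "(phi_LSQ has_real_derivative - 1/8) (at 0)"
    unfolding phi_LSQ_def by (rule derivative_eq_intros refl | simp add: add_pos_pos)+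
  then show "\<exists>D<0. (phi_LSQ has_real_derivative D) (at 0)"
    by force
qed


lemma le_if_minimal_at_0:
  fixes \<phi> :: "real \<Rightarrow> real"
  assumes deriv: "(\<phi> has_real_derivative D) (at 0)" and "D < 0"
    and minimal: "\<And>t. (p + q) * \<phi> 0 \<le> p * \<phi> t + q * \<phi> (- t)"
  shows "p \<le> q"
proof (rule ccontr)
  assume "\<not> p \<le> q"
  have "((\<lambda>t. \<phi> (- t)) has_real_derivative D * -1) (at 0)"
    using DERIV_chain2[OF _ DERIV_minus[OF DERIV_ident], of \<phi> D] deriv by simp
  then have "((\<lambda>t. p * \<phi> t + q * \<phi> (- t)) has_real_derivative p * D + q * (D * -1)) (at 0)"
    by (intro DERIV_add DERIV_cmult deriv)
  moreover have "p * D + q * (D * -1) < 0"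
    using \<open>\<not> p \<le> q\<close> \<open>D < 0\<close> by (simp add: algebra_simps mult_strict_right_mono_neg)
  ultimately obtain d where "0 < d"
    and "\<And>h. 0 < h \<Longrightarrow> h < d \<Longrightarrow> p * \<phi> (0 + h) + q * \<phi> (- (0 + h)) < p * \<phi> 0 + q * \<phi> (- 0)"
    using DERIV_neg_dec_right by blast
  then have "p * \<phi> (d / 2) + q * \<phi> (- (d / 2)) < (p + q) * \<phi> 0"
    by (simp add: algebra_simps)
  with minimal[of "d / 2"] show False
    by linarith
qed

lemma nn_integral_comp_mono_if_mono_on_preimages:
  fixes X :: "'w \<Rightarrow> 'a" and \<rho>\<^sub>1 \<rho>\<^sub>2 :: "'w \<Rightarrow> ennreal"
  assumes [measurable]: "X \<in> measurable M N" "\<rho>\<^sub>1 \<in> borel_measurable M" "\<rho>\<^sub>2 \<in> borel_measurable M"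
    "f \<in> borel_measurable N"
    and mono_on_preimages: "\<And>B. B \<in> sets N \<Longrightarrow>
      (\<integral>\<^sup>+\<omega>. \<rho>\<^sub>1 \<omega> * indicator B (X \<omega>) \<partial>M) \<le> (\<integral>\<^sup>+\<omega>. \<rho>\<^sub>2 \<omega> * indicator B (X \<omega>) \<partial>M)"
  shows "(\<integral>\<^sup>+\<omega>. \<rho>\<^sub>1 \<omega> * f (X \<omega>) \<partial>M) \<le> (\<integral>\<^sup>+\<omega>. \<rho>\<^sub>2 \<omega> * f (X \<omega>) \<partial>M)"
proof -
  define \<nu> where "\<nu> \<rho> = distr (density M \<rho>) N X" for \<rho>
  have sets_\<nu>[simp]: "sets (\<nu> \<rho>) = sets N" for \<rho>
    by (simp add: \<nu>_def)
  have emeasure_\<nu>: "emeasure (\<nu> \<rho>) B = (\<integral>\<^sup>+\<omega>. \<rho> \<omega> * indicator B (X \<omega>) \<partial>M)"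
    if [measurable]: "\<rho> \<in> borel_measurable M" "B \<in> sets N" for \<rho> B
  proof -
    have "emeasure (\<nu> \<rho>) B = (\<integral>\<^sup>+\<omega>. \<rho> \<omega> * indicator (X -` B \<inter> space M) \<omega> \<partial>M)"
      by (simp add: \<nu>_def emeasure_distr emeasure_density)
    also have "\<dots> = (\<integral>\<^sup>+\<omega>. \<rho> \<omega> * indicator B (X \<omega>) \<partial>M)"
      by (intro nn_integral_cong) (auto simp: indicator_def)
    finally show ?thesis .
  qed
  have "\<nu> \<rho>\<^sub>1 \<le> \<nu> \<rho>\<^sub>2"
    unfolding le_measure_iff
  proof (simp add: sets_eq_imp_space_eq[OF sets_\<nu>], intro le_funI)
    show "emeasure (\<nu> \<rho>\<^sub>1) B \<le> emeasure (\<nu> \<rho>\<^sub>2) B" for B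
      by (cases "B \<in> sets N") (simp_all add: emeasure_\<nu> mono_on_preimages emeasure_notin_sets)
  qed
  then have "integral\<^sup>N (\<nu> \<rho>\<^sub>1) f \<le> integral\<^sup>N (\<nu> \<rho>\<^sub>2) f"
    by (intro nn_integral_mono_measure) simp_all
  then show ?thesis
    by (simp add: \<nu>_def nn_integral_distr nn_integral_density)
qed

lemma emeasure_le_if_weighted_le:
  fixes X :: "'w \<Rightarrow> 'a" and w :: "'a \<Rightarrow> real"
  assumes X_measurable[measurable]: "X \<in> measurable M N" and [measurable]: "w \<in> borel_measurable N"
    and w_nonneg: "\<And>x. 0 \<le> w x"
    and [measurable]: "E\<^sub>1 \<in> sets M" "E\<^sub>2 \<in> sets M" and C_sets[measurable]: "C \<in> sets N"
    and weighted_le: "\<And>B. B \<in> sets N \<Longrightarrow>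
          (\<integral>\<^sup>+\<omega>. indicator E\<^sub>1 \<omega> * ennreal (w (X \<omega>)) * indicator B (X \<omega>) \<partial>M)
        \<le> (\<integral>\<^sup>+\<omega>. indicator E\<^sub>2 \<omega> * ennreal (w (X \<omega>)) * indicator B (X \<omega>) \<partial>M)"
    and w_pos: "\<And>x. x \<in> C \<Longrightarrow> 0 < w x"
  shows "emeasure M (E\<^sub>1 \<inter> X -` C) \<le> emeasure M (E\<^sub>2 \<inter> X -` C)"
proof -
  define f where "f x = indicator C x * ennreal (1 / w x)" for x
  have f_measurable[measurable]: "f \<in> borel_measurable N"
    unfolding f_def by measurable
  have weighted_f: "(\<integral>\<^sup>+\<omega>. indicator E \<omega> * ennreal (w (X \<omega>)) * f (X \<omega>) \<partial>M) = emeasure M (E \<inter> X -` C)"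
    if "E \<in> sets M" for E
  proof -
    have "(\<integral>\<^sup>+\<omega>. indicator E \<omega> * ennreal (w (X \<omega>)) * f (X \<omega>) \<partial>M) = (\<integral>\<^sup>+\<omega>. indicator (E \<inter> X -` C) \<omega> \<partial>M)"
      using w_nonneg
      by (intro nn_integral_cong) (auto simp: f_def indicator_def ennreal_mult'[symmetric] simp del: ennreal_1 dest: w_pos)
    also have "\<dots> = emeasure M (E \<inter> X -` C)"
    proof (rule nn_integral_indicator)
      have "E \<inter> X -` C = E \<inter> (X -` C \<inter> space M)"
        using sets.sets_into_space[OF that] by blast
      then show "E \<inter> X -` C \<in> sets M"
        using sets.Int[OF that measurable_sets[OF X_measurable C_sets]] by simp
    qed
    finally show ?thesis .
  qed
  have "(\<integral>\<^sup>+\<omega>. indicator E\<^sub>1 \<omega> * ennreal (w (X \<omega>)) * f (X \<omega>) \<partial>M)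
      \<le> (\<integral>\<^sup>+\<omega>. indicator E\<^sub>2 \<omega> * ennreal (w (X \<omega>)) * f (X \<omega>) \<partial>M)"
  proof (rule nn_integral_comp_mono_if_mono_on_preimages[OF X_measurable])
    show "(\<lambda>\<omega>. indicator E\<^sub>1 \<omega> * ennreal (w (X \<omega>))) \<in> borel_measurable M"
      by measurable
    show "(\<lambda>\<omega>. indicator E\<^sub>2 \<omega> * ennreal (w (X \<omega>))) \<in> borel_measurable M"
      by measurable
  qed (simp_all add: weighted_le f_measurable)
  then show ?thesis
    by (simp add: weighted_f)
qed

lemma (in finite_measure) measure_Collect_split:
  assumes "Measurable.pred M P" "Measurable.pred M Q"
  shows "measure M {\<omega>\<in>space M. P \<omega>}
    = measure M {\<omega>\<in>space M. P \<omega> \<and> Q \<omega>} + measure M {\<omega>\<in>space M. P \<omega> \<and> \<not> Q \<omega>}"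
proof -
  have "{\<omega>\<in>space M. P \<omega>} = {\<omega>\<in>space M. P \<omega> \<and> Q \<omega>} \<union> {\<omega>\<in>space M. P \<omega> \<and> \<not> Q \<omega>}"
    by blast
  then show ?thesis
    using assms by (simp add: finite_measure_Union disjoint_iff)
qed

section \<open>Minimisers of the surrogate risk\<close>

lemma hcl_measurable[measurable]: "hcl \<in> borel_measurable borel"
  unfolding hcl_def by measurable

lemma hcl_pos: "0 < v \<Longrightarrow> hcl v = 1"
  by (simp add: hcl_def)

lemma hcl_nonpos: "v \<le> 0 \<Longrightarrow> hcl v = -1"
  by (simp add: hcl_def)

locale surrogate_risk_minimizer = prob_space M + margin_loss \<phi>
  for M :: "'w measure" and \<phi> :: "real \<Rightarrow> real" +
  fixes X :: "'w \<Rightarrow> 'a::topological_space" and Y :: "'w \<Rightarrow> real" and gbar :: "'a \<Rightarrow> real"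
  assumes X_measurable[measurable]: "X \<in> borel_measurable M"
    and Y_measurable[measurable]: "Y \<in> borel_measurable M"
    and Y_sign: "\<forall>\<omega>\<in>space M. Y \<omega> \<in> {1, -1}"
    and gbar_measurable[measurable]: "gbar \<in> borel_measurable borel"
    and gbar_minimal: "\<forall>g \<in> borel_measurable borel.
           (\<integral>\<^sup>+ \<omega>. ennreal (\<phi> (Y \<omega> * gbar (X \<omega>))) \<partial>M)
             \<le> (\<integral>\<^sup>+ \<omega>. ennreal (\<phi> (Y \<omega> * g (X \<omega>))) \<partial>M)"
begin

abbreviation partial_risk :: "'a set \<Rightarrow> ('a \<Rightarrow> real) \<Rightarrow> ennreal" where
  "partial_risk B g \<equiv> \<integral>\<^sup>+ \<omega>. ennreal (\<phi> (Y \<omega> * g (X \<omega>))) * indicator B (X \<omega>) \<partial>M"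

lemma risk_finite: "(\<integral>\<^sup>+ \<omega>. ennreal (\<phi> (Y \<omega> * gbar (X \<omega>))) \<partial>M) < \<infinity>"
proof -
  have "(\<integral>\<^sup>+ \<omega>. ennreal (\<phi> (Y \<omega> * gbar (X \<omega>))) \<partial>M)
      \<le> (\<integral>\<^sup>+ \<omega>. ennreal (\<phi> (Y \<omega> * (\<lambda>_. 0) (X \<omega>))) \<partial>M)"
    by (rule gbar_minimal[rule_format]) simp
  also have "\<dots> = ennreal (\<phi> 0)"
    by (simp add: emeasure_space_1)
  finally show ?thesis
    by (simp add: order.strict_trans1)
qed

lemma partial_risk_cong: "(\<And>x. x \<in> B \<Longrightarrow> g x = h x) \<Longrightarrow> partial_risk B g = partial_risk B h"
  by (intro nn_integral_cong) (simp add: indicator_def)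

lemma partial_risk_minimal:
  assumes [measurable]: "B \<in> sets borel" "g \<in> borel_measurable borel"
    and outside: "\<And>x. x \<notin> B \<Longrightarrow> g x = gbar x"
  shows "partial_risk B gbar \<le> partial_risk B g"
proof -
  have risk_split: "(\<integral>\<^sup>+ \<omega>. ennreal (\<phi> (Y \<omega> * h (X \<omega>))) \<partial>M) = partial_risk B h + partial_risk (- B) h"
    if [measurable]: "h \<in> borel_measurable borel" for h
    by (subst nn_integral_add[symmetric]) (auto intro!: nn_integral_cong simp: indicator_def)
  have same_outside: "partial_risk (- B) g = partial_risk (- B) gbar"
    using outside by (intro partial_risk_cong) simp
  have "partial_risk (- B) gbar < \<infinity>"
    using risk_split[of gbar] risk_finite by (simp add: top.not_eq_extremum)
  moreover have "partial_risk (- B) gbar + partial_risk B gbar \<le> partial_risk (- B) gbar + partial_risk B g"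
    using gbar_minimal[rule_format, of g] risk_split[of gbar] risk_split[of g] same_outside
    by (simp add: add.commute)
  ultimately show ?thesis
    by (auto simp: ennreal_add_left_cancel_le)
qed

lemma partial_risk_le_sign_flip:
  assumes [measurable]: "B \<in> sets borel"
  shows "partial_risk B gbar \<le> partial_risk B (\<lambda>x. - gbar x)"
proof -
  have "partial_risk B gbar \<le> partial_risk B (\<lambda>x. if x \<in> B then - gbar x else gbar x)"
    by (rule partial_risk_minimal) simp_all
  also have "\<dots> = partial_risk B (\<lambda>x. - gbar x)"
    by (rule partial_risk_cong) simp
  finally show ?thesis .
qed

definition loss_gap :: "'a \<Rightarrow> real" where
  "loss_gap x = (if 0 < gbar x then \<phi> (- gbar x) - \<phi> (gbar x) else 0)"

lemma loss_gap_measurable[measurable]: "loss_gap \<in> borel_measurable borel"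
  unfolding loss_gap_def by measurable

lemma loss_gap_nonneg: "0 \<le> loss_gap x"
  using favours_positive_margin[of "gbar x"] by (auto simp: loss_gap_def)

lemma loss_gap_pos: "0 < gbar x \<Longrightarrow> 0 < loss_gap x"
  using favours_positive_margin[of "gbar x"] by (simp add: loss_gap_def)

lemma weighted_label_mass_le:
  assumes [measurable]: "B \<in> sets borel"
  shows "(\<integral>\<^sup>+\<omega>. indicator {\<omega>\<in>space M. Y \<omega> = -1} \<omega> * ennreal (loss_gap (X \<omega>)) * indicator B (X \<omega>) \<partial>M)
       \<le> (\<integral>\<^sup>+\<omega>. indicator {\<omega>\<in>space M. Y \<omega> = 1} \<omega> * ennreal (loss_gap (X \<omega>)) * indicator B (X \<omega>) \<partial>M)"
proof -
  define B' where "B' = B \<inter> {x. 0 < gbar x}"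
  have [measurable]: "B' \<in> sets borel"
    unfolding B'_def by measurable
  define b where "b = (\<integral>\<^sup>+\<omega>. ennreal (\<phi> (gbar (X \<omega>))) * indicator B' (X \<omega>) \<partial>M)"
  have split: "partial_risk B' (\<lambda>x. y * gbar x)
      = b + (\<integral>\<^sup>+\<omega>. indicator {\<omega>\<in>space M. Y \<omega> = - y} \<omega> * ennreal (loss_gap (X \<omega>)) * indicator B (X \<omega>) \<partial>M)"
    if "y \<in> {1, -1}" for y
    unfolding b_def
  proof (subst nn_integral_add[symmetric], simp, simp, intro nn_integral_cong)
    fix \<omega> assume "\<omega> \<in> space M"
    then show "ennreal (\<phi> (Y \<omega> * (y * gbar (X \<omega>)))) * indicator B' (X \<omega>)
        = ennreal (\<phi> (gbar (X \<omega>))) * indicator B' (X \<omega>)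
          + indicator {\<omega>\<in>space M. Y \<omega> = - y} \<omega> * ennreal (loss_gap (X \<omega>)) * indicator B (X \<omega>)"
      using that Y_sign favours_positive_margin[of "gbar (X \<omega>)"] nonneg
      by (auto simp: B'_def loss_gap_def indicator_def ennreal_plus[symmetric] simp del: ennreal_plus)
  qed
  have "b \<le> partial_risk B' gbar"
    using split[of 1] by simp
  also have "\<dots> \<le> (\<integral>\<^sup>+ \<omega>. ennreal (\<phi> (Y \<omega> * gbar (X \<omega>))) \<partial>M)"
    by (intro nn_integral_mono) (simp add: indicator_def)
  finally have "b < \<infinity>"
    using risk_finite by simp
  moreover have "partial_risk B' gbar \<le> partial_risk B' (\<lambda>x. - gbar x)"
    by (rule partial_risk_le_sign_flip) simp
  ultimately show ?thesis
    using split[of 1] split[of "-1"] by (auto simp: ennreal_add_left_cancel_le)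
qed

lemma measure_neg_label_le_pos_label_on_pos_set:
  assumes [measurable]: "C \<in> sets borel" and C_pos: "C \<subseteq> {x. 0 < gbar x}"
  shows "measure M {\<omega>\<in>space M. Y \<omega> = -1 \<and> X \<omega> \<in> C} \<le> measure M {\<omega>\<in>space M. Y \<omega> = 1 \<and> X \<omega> \<in> C}"
proof -
  have "emeasure M ({\<omega>\<in>space M. Y \<omega> = -1} \<inter> X -` C) \<le> emeasure M ({\<omega>\<in>space M. Y \<omega> = 1} \<inter> X -` C)"
    by (rule emeasure_le_if_weighted_le[where N = borel and w = loss_gap])
      (use C_pos in \<open>auto intro: loss_gap_nonneg weighted_label_mass_le loss_gap_pos\<close>)
  moreover have "{\<omega>\<in>space M. Y \<omega> = y} \<inter> X -` C = {\<omega>\<in>space M. Y \<omega> = y \<and> X \<omega> \<in> C}" for y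
    by auto
  ultimately show ?thesis
    by (simp add: emeasure_eq_measure)
qed

lemma sign_flipped: "surrogate_risk_minimizer M \<phi> X (\<lambda>\<omega>. - Y \<omega>) (\<lambda>x. - gbar x)"
proof unfold_locales
  show "\<forall>\<omega>\<in>space M. - Y \<omega> \<in> {1, -1}"
    using Y_sign by auto
  show "\<forall>g \<in> borel_measurable borel.
           (\<integral>\<^sup>+ \<omega>. ennreal (\<phi> (- Y \<omega> * - gbar (X \<omega>))) \<partial>M)
             \<le> (\<integral>\<^sup>+ \<omega>. ennreal (\<phi> (- Y \<omega> * g (X \<omega>))) \<partial>M)"
  proof
    fix g :: "'a \<Rightarrow> real" assume [measurable]: "g \<in> borel_measurable borel"
    show "(\<integral>\<^sup>+ \<omega>. ennreal (\<phi> (- Y \<omega> * - gbar (X \<omega>))) \<partial>M)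
             \<le> (\<integral>\<^sup>+ \<omega>. ennreal (\<phi> (- Y \<omega> * g (X \<omega>))) \<partial>M)"
      using gbar_minimal[rule_format, of "\<lambda>x. - g x"] by simp
  qed
qed simp_all

lemma measure_pos_label_le_neg_label_on_neg_set:
  assumes "C \<in> sets borel" and "C \<subseteq> {x. gbar x < 0}"
  shows "measure M {\<omega>\<in>space M. Y \<omega> = 1 \<and> X \<omega> \<in> C} \<le> measure M {\<omega>\<in>space M. Y \<omega> = -1 \<and> X \<omega> \<in> C}"
proof -
  interpret flipped: surrogate_risk_minimizer M \<phi> X "\<lambda>\<omega>. - Y \<omega>" "\<lambda>x. - gbar x"
    by (rule sign_flipped)
  show ?thesis
    using flipped.measure_neg_label_le_pos_label_on_pos_set[of C] assms by auto
qed

lemma partial_risk_const: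
  assumes [measurable]: "C \<in> sets borel"
  shows "partial_risk C (\<lambda>_. t)
    = ennreal (\<phi> t * measure M {\<omega>\<in>space M. Y \<omega> = 1 \<and> X \<omega> \<in> C}
             + \<phi> (- t) * measure M {\<omega>\<in>space M. Y \<omega> = -1 \<and> X \<omega> \<in> C})"
proof -
  define P where "P y = {\<omega>\<in>space M. Y \<omega> = y \<and> X \<omega> \<in> C}" for y
  have [measurable]: "P y \<in> sets M" for y
    unfolding P_def by measurable
  have "partial_risk C (\<lambda>_. t) = (\<integral>\<^sup>+ \<omega>. ennreal (\<phi> t) * indicator (P 1) \<omega> + ennreal (\<phi> (- t)) * indicator (P (-1)) \<omega> \<partial>M)"
    using Y_sign by (intro nn_integral_cong) (auto simp: indicator_def P_def)
  also have "\<dots> = ennreal (\<phi> t) * emeasure M (P 1) + ennreal (\<phi> (- t)) * emeasure M (P (-1))"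
    by (simp add: nn_integral_add nn_integral_cmult_indicator)
  also have "\<dots> = ennreal (\<phi> t * measure M (P 1) + \<phi> (- t) * measure M (P (-1)))"
    using nonneg by (simp add: emeasure_eq_measure ennreal_mult ennreal_plus)
  finally show ?thesis
    by (simp add: P_def)
qed

lemma measure_pos_label_le_neg_label_on_zero_set:
  assumes [measurable]: "C \<in> sets borel" and C_zero: "C \<subseteq> {x. gbar x = 0}"
  shows "measure M {\<omega>\<in>space M. Y \<omega> = 1 \<and> X \<omega> \<in> C} \<le> measure M {\<omega>\<in>space M. Y \<omega> = -1 \<and> X \<omega> \<in> C}"
    (is "?p \<le> ?q")
proof -
  obtain D where "(\<phi> has_real_derivative D) (at 0)" "D < 0"
    using decreasing_at_0 by blast
  moreover have "(?p + ?q) * \<phi> 0 \<le> ?p * \<phi> t + ?q * \<phi> (- t)" for t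
  proof -
    have "partial_risk C (\<lambda>_. 0) = partial_risk C gbar"
      using C_zero by (intro partial_risk_cong) auto
    also have "\<dots> \<le> partial_risk C (\<lambda>x. if x \<in> C then t else gbar x)"
      by (rule partial_risk_minimal) simp_all
    also have "\<dots> = partial_risk C (\<lambda>_. t)"
      by (rule partial_risk_cong) simp
    finally have "ennreal (\<phi> 0 * ?p + \<phi> (- 0) * ?q) \<le> ennreal (\<phi> t * ?p + \<phi> (- t) * ?q)"
      by (simp only: partial_risk_const[OF assms(1)])
    moreover have "0 \<le> \<phi> t * ?p + \<phi> (- t) * ?q"
      using nonneg by simp
    ultimately show ?thesis
      by (simp add: algebra_simps)
  qed
  ultimately show ?thesis
    by (rule le_if_minimal_at_0)
qed

lemma measure_pos_label_le_neg_label_on_nonpos_set: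
  assumes [measurable]: "C \<in> sets borel" and C_nonpos: "C \<subseteq> {x. gbar x \<le> 0}"
  shows "measure M {\<omega>\<in>space M. Y \<omega> = 1 \<and> X \<omega> \<in> C} \<le> measure M {\<omega>\<in>space M. Y \<omega> = -1 \<and> X \<omega> \<in> C}"
proof -
  have split: "measure M {\<omega>\<in>space M. Y \<omega> = y \<and> X \<omega> \<in> C}
      = measure M {\<omega>\<in>space M. Y \<omega> = y \<and> X \<omega> \<in> C \<inter> {x. gbar x < 0}}
        + measure M {\<omega>\<in>space M. Y \<omega> = y \<and> X \<omega> \<in> C \<inter> {x. gbar x = 0}}" for y
  proof -
    have "measure M {\<omega>\<in>space M. Y \<omega> = y \<and> X \<omega> \<in> C}
        = measure M {\<omega>\<in>space M. (Y \<omega> = y \<and> X \<omega> \<in> C) \<and> gbar (X \<omega>) < 0}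
          + measure M {\<omega>\<in>space M. (Y \<omega> = y \<and> X \<omega> \<in> C) \<and> \<not> gbar (X \<omega>) < 0}"
      by (rule measure_Collect_split) measurable
    also have "{\<omega>\<in>space M. (Y \<omega> = y \<and> X \<omega> \<in> C) \<and> \<not> gbar (X \<omega>) < 0}
        = {\<omega>\<in>space M. Y \<omega> = y \<and> X \<omega> \<in> C \<inter> {x. gbar x = 0}}"
      using C_nonpos by force
    finally show ?thesis
      by (simp add: conj_assoc)
  qed
  show ?thesis
    unfolding split
    by (intro add_mono measure_pos_label_le_neg_label_on_neg_set measure_pos_label_le_neg_label_on_zero_set)
      auto
qed

lemma hcl_eq_label_iff:
  "\<omega> \<in> space M \<Longrightarrow> hcl (gbar (X \<omega>)) = Y \<omega> \<longleftrightarrow> Y \<omega> = (if 0 < gbar (X \<omega>) then 1 else -1)"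
  using Y_sign by (auto simp: hcl_def)

lemma misclassification_le_correct_classification_on:
  assumes [measurable]: "S \<in> sets borel"
  shows "measure M {\<omega>\<in>space M. hcl (gbar (X \<omega>)) \<noteq> Y \<omega> \<and> X \<omega> \<in> S}
    \<le> measure M {\<omega>\<in>space M. hcl (gbar (X \<omega>)) = Y \<omega> \<and> X \<omega> \<in> S}"
proof -
  let ?S_pos = "S \<inter> {x. 0 < gbar x}" and ?S_nonpos = "S \<inter> {x. gbar x \<le> 0}"
  have "measure M {\<omega>\<in>space M. hcl (gbar (X \<omega>)) \<noteq> Y \<omega> \<and> X \<omega> \<in> S}
      = measure M {\<omega>\<in>space M. (hcl (gbar (X \<omega>)) \<noteq> Y \<omega> \<and> X \<omega> \<in> S) \<and> 0 < gbar (X \<omega>)}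
        + measure M {\<omega>\<in>space M. (hcl (gbar (X \<omega>)) \<noteq> Y \<omega> \<and> X \<omega> \<in> S) \<and> \<not> 0 < gbar (X \<omega>)}"
    by (rule measure_Collect_split) measurable
  also have "\<dots> = measure M {\<omega>\<in>space M. Y \<omega> = -1 \<and> X \<omega> \<in> ?S_pos}
        + measure M {\<omega>\<in>space M. Y \<omega> = 1 \<and> X \<omega> \<in> ?S_nonpos}"
    using Y_sign by (intro arg_cong2[where f = "(+)"] arg_cong[where f = "measure M"]) (auto simp: hcl_eq_label_iff hcl_pos hcl_nonpos)
  also have "\<dots> \<le> measure M {\<omega>\<in>space M. Y \<omega> = 1 \<and> X \<omega> \<in> ?S_pos}
        + measure M {\<omega>\<in>space M. Y \<omega> = -1 \<and> X \<omega> \<in> ?S_nonpos}"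
    by (intro add_mono measure_neg_label_le_pos_label_on_pos_set measure_pos_label_le_neg_label_on_nonpos_set)
      auto
  also have "\<dots> = measure M {\<omega>\<in>space M. (hcl (gbar (X \<omega>)) = Y \<omega> \<and> X \<omega> \<in> S) \<and> 0 < gbar (X \<omega>)}
        + measure M {\<omega>\<in>space M. (hcl (gbar (X \<omega>)) = Y \<omega> \<and> X \<omega> \<in> S) \<and> \<not> 0 < gbar (X \<omega>)}"
    using Y_sign by (intro arg_cong2[where f = "(+)"] arg_cong[where f = "measure M"]) (auto simp: hcl_eq_label_iff hcl_pos hcl_nonpos)
  also have "\<dots> = measure M {\<omega>\<in>space M. hcl (gbar (X \<omega>)) = Y \<omega> \<and> X \<omega> \<in> S}"
    by (rule measure_Collect_split[symmetric]) measurable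
  finally show ?thesis .
qed

lemma misclassification_le:
  assumes [measurable]: "f \<in> borel_measurable borel"
  shows "measure M {\<omega>\<in>space M. hcl (gbar (X \<omega>)) \<noteq> Y \<omega>} \<le> measure M {\<omega>\<in>space M. f (X \<omega>) \<noteq> Y \<omega>}"
proof -
  define A where "A = {x. f x \<noteq> hcl (gbar x)}"
  have [measurable]: "A \<in> sets borel"
    unfolding A_def by measurable
  have "measure M {\<omega>\<in>space M. hcl (gbar (X \<omega>)) \<noteq> Y \<omega>}
      = measure M {\<omega>\<in>space M. hcl (gbar (X \<omega>)) \<noteq> Y \<omega> \<and> X \<omega> \<in> A}
        + measure M {\<omega>\<in>space M. hcl (gbar (X \<omega>)) \<noteq> Y \<omega> \<and> X \<omega> \<notin> A}"
    by (rule measure_Collect_split) measurable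
  also have "\<dots> \<le> measure M {\<omega>\<in>space M. hcl (gbar (X \<omega>)) = Y \<omega> \<and> X \<omega> \<in> A}
        + measure M {\<omega>\<in>space M. f (X \<omega>) \<noteq> Y \<omega> \<and> X \<omega> \<notin> A}"
    by (intro add_mono misclassification_le_correct_classification_on finite_measure_mono)
      (auto simp: A_def)
  also have "\<dots> \<le> measure M {\<omega>\<in>space M. f (X \<omega>) \<noteq> Y \<omega> \<and> X \<omega> \<in> A}
        + measure M {\<omega>\<in>space M. f (X \<omega>) \<noteq> Y \<omega> \<and> X \<omega> \<notin> A}"
    by (intro add_mono finite_measure_mono) (auto simp: A_def)
  also have "\<dots> = measure M {\<omega>\<in>space M. f (X \<omega>) \<noteq> Y \<omega>}"
    by (rule measure_Collect_split[symmetric]) measurable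
  finally show ?thesis .
qed

end


theorem corollary2:
  fixes M :: "'w measure" and X :: "'w \<Rightarrow> real ^ 'd" and Y :: "'w \<Rightarrow> real"
    and \<alpha> :: real and \<phi> :: "real \<Rightarrow> real" and gbar :: "real ^ 'd \<Rightarrow> real"
  assumes "prob_space M"
    and "X \<in> borel_measurable M"
    and "Y \<in> borel_measurable M"
    and "\<forall>\<omega>\<in>space M. Y \<omega> \<in> {1, -1}"
    and "0 \<le> \<alpha>" and "\<alpha> < 1"
    and "\<phi> \<in> {phi_LR, phi_LS \<alpha>, phi_MLS \<alpha>, phi_LSQ}"
    and "gbar \<in> borel_measurable borel"
    and "\<forall>g \<in> borel_measurable borel.
           (\<integral>\<^sup>+ \<omega>. ennreal (\<phi> (Y \<omega> * gbar (X \<omega>))) \<partial>M)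
             \<le> (\<integral>\<^sup>+ \<omega>. ennreal (\<phi> (Y \<omega> * g (X \<omega>))) \<partial>M)"
  shows "measure M {\<omega> \<in> space M. hcl (gbar (X \<omega>)) \<noteq> Y \<omega>}
         = (INF f \<in> {f :: real ^ 'd \<Rightarrow> real. f \<in> borel_measurable borel \<and> (\<forall>x. f x \<in> {1, -1})}.
              measure M {\<omega> \<in> space M. f (X \<omega>) \<noteq> Y \<omega>})"
proof -
  have "margin_loss \<phi>"
    using assms(5-7) margin_loss_phi_LR margin_loss_phi_LS margin_loss_phi_MLS margin_loss_phi_LSQ
    by auto
  then interpret surrogate_risk_minimizer M \<phi> X Y gbar
    using assms by (simp add: surrogate_risk_minimizer_def surrogate_risk_minimizer_axioms_def)
  have "(\<lambda>x. hcl (gbar x)) \<in> {f. f \<in> borel_measurable borel \<and> (\<forall>x. f x \<in> {1, -1})}"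
    by (simp add: hcl_def)
  then show ?thesis
    by (intro cInf_eq_minimum[symmetric] rev_image_eqI) (auto intro: misclassification_le)
qed

end
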